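(* Let $\Phi:\ell^\infty(\mathbb Z)\to\ell^\infty(\mathbb Z)$ be a contractive, idempotent linear map commuting with the backward shift $B$. If $\lambda_1,\lambda_2,\lambda_3\in\sigma(\Phi)$, then $\lambda_1\overline{\lambda_2}\lambda_3\in\sigma(\Phi)$. For any $\lambda\in\sigma(\Phi)$, the set $\overline{\lambda}\cdot\sigma(\Phi)=\{\overline\lambda\mu:\mu\in\sigma(\Phi)\}$ is a subgroup of $\mathbb T$. If in addition $\Phi$ is unital, then $\sigma(\Phi)$ is a subgroup of $\mathbb T$.
   Context: $(Bv)_n=v_{n+1}$. For $\lambda\in\mathbb T$ let $x_\lambda=(\lambda^n)_{n\in\mathbb Z}$; a linear map $\Phi$ commuting with $B$ satisfies $\Phi(x_\lambda)=c_\lambda x_\lambda$ for some scalar $c_\lambda$, and $\sigma(\Phi)=\{\lambda\in\mathbb T:c_\lambda\neq0\}$. *)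

theory Defs
  imports "HOL-Analysis.Analysis"
begin

definition linfty :: "(int \<Rightarrow> complex) set" where
  "linfty = {x. bounded (range x)}"

definition supnorm :: "(int \<Rightarrow> complex) \<Rightarrow> real" where
  "supnorm x = (SUP n. norm (x n))"

definition bshift :: "(int \<Rightarrow> complex) \<Rightarrow> (int \<Rightarrow> complex)" where
  "bshift v = (\<lambda>n. v (n + 1))"

definition charseq :: "complex \<Rightarrow> (int \<Rightarrow> complex)" where
  "charseq l = (\<lambda>n. l powi n)"

definition circle :: "complex set" where
  "circle = {z. norm z = 1}"

definition contr_idem_shift_inv :: "((int \<Rightarrow> complex) \<Rightarrow> (int \<Rightarrow> complex)) \<Rightarrow> bool" where
  "contr_idem_shift_inv \<Phi> \<longleftrightarrow>
     (\<forall>x\<in>linfty. \<Phi> x \<in> linfty) \<and>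
     (\<forall>x\<in>linfty. \<forall>y\<in>linfty. \<forall>a b. \<Phi> (\<lambda>n. a * x n + b * y n) = (\<lambda>n. a * \<Phi> x n + b * \<Phi> y n)) \<and>
     (\<forall>x\<in>linfty. supnorm (\<Phi> x) \<le> supnorm x) \<and>
     (\<forall>x\<in>linfty. \<Phi> (\<Phi> x) = \<Phi> x) \<and>
     (\<forall>x\<in>linfty. \<Phi> (bshift x) = bshift (\<Phi> x))"

definition spec :: "((int \<Rightarrow> complex) \<Rightarrow> (int \<Rightarrow> complex)) \<Rightarrow> complex set" where
  "spec \<Phi> = {l \<in> circle. \<exists>c. c \<noteq> 0 \<and> \<Phi> (charseq l) = (\<lambda>n. c * charseq l n)}"

definition circle_subgroup :: "complex set \<Rightarrow> bool" where
  "circle_subgroup S \<longleftrightarrow> S \<subseteq> circle \<and> 1 \<in> S \<and>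
     (\<forall>a\<in>S. \<forall>b\<in>S. a * b \<in> S) \<and> (\<forall>a\<in>S. inverse a \<in> S)"

end

theory Submission
  imports Defs
begin

text \<open>
  Commuting with B forces \<open>\<Phi> x_\<lambda> = c_\<lambda> x_\<lambda>\<close>, and idempotence forces \<open>c_\<lambda> = 1\<close> for
  \<open>\<lambda> \<in> \<sigma>(\<Phi>)\<close>. For \<open>\<lambda>1, \<lambda>2, \<lambda>3 \<in> \<sigma>(\<Phi>)\<close> and \<open>\<mu> = \<lambda>1 cnj(\<lambda>2) \<lambda>3\<close>, if \<open>c_\<mu> = 0\<close> then
  \<open>y = x_\<lambda>1 + x_\<lambda>2 + x_\<lambda>3 - x_\<mu>\<close> satisfies \<open>\<Phi> y = x_\<lambda>1 + x_\<lambda>2 + x_\<lambda>3\<close>, whose value at 0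
  is 3. But every entry of \<open>y\<close> has the form \<open>a + b + c - a cnj(b) c\<close> with \<open>a, b, c\<close>
  unimodular; with \<open>u = a cnj(b)\<close> its modulus is at most \<open>|1 + u| + |1 - u| \<le> sqrt 8 < 3\<close>,
  contradicting contractivity. Closure under \<open>(a, b, c) \<mapsto> a cnj(b) c\<close> is exactly what makes
  each translate \<open>cnj(\<lambda>) \<sigma>(\<Phi>)\<close> a subgroup of the circle.
\<close>

lemma linfty_lincomb:
  assumes "x \<in> linfty" "y \<in> linfty"
  shows "(\<lambda>n. a * x n + b * y n) \<in> linfty"
proof -
  from assms obtain Bx By where "\<forall>n. norm (x n) \<le> Bx" "\<forall>n. norm (y n) \<le> By"
    unfolding linfty_def bounded_iff by blast
  then have "norm (a * x n + b * y n) \<le> norm a * Bx + norm b * By" for n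
    by (metis norm_mult norm_triangle_le add_mono mult_left_mono norm_ge_zero)
  then show ?thesis
    unfolding linfty_def bounded_iff by blast
qed

lemma norm_charseq: "l \<in> circle \<Longrightarrow> norm (charseq l n) = 1"
  by (simp add: circle_def charseq_def norm_power_int)

lemma charseq_in_linfty: "l \<in> circle \<Longrightarrow> charseq l \<in> linfty"
  unfolding linfty_def bounded_iff by (auto simp: norm_charseq)

lemma supnorm_upper: "x \<in> linfty \<Longrightarrow> norm (x n) \<le> supnorm x"
  unfolding supnorm_def linfty_def
  by (rule cSUP_upper) (auto simp: bdd_above_def bounded_iff)

lemma supnorm_least: "(\<And>n. norm (x n) \<le> B) \<Longrightarrow> supnorm x \<le> B"
  unfolding supnorm_def by (rule cSUP_least) auto

lemma bshift_charseq: "l \<noteq> 0 \<Longrightarrow> bshift (charseq l) = (\<lambda>n. l * charseq l n)"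
  by (simp add: bshift_def charseq_def power_int_add_1')

lemma geometric_recurrence_eq_charseq:
  fixes f :: "int \<Rightarrow> complex"
  assumes "l \<noteq> 0" and rec: "\<And>n. f (n + 1) = l * f n"
  shows "f = (\<lambda>n. f 0 * charseq l n)"
proof
  fix n
  show "f n = f 0 * charseq l n"
  proof (induction n rule: int_induct[where k = 0])
    case base
    show ?case by (simp add: charseq_def)
  next
    case (step1 i)
    then show ?case
      using rec[of i] \<open>l \<noteq> 0\<close> by (simp add: charseq_def power_int_add_1')
  next
    case (step2 i)
    have "l * f (i - 1) = l * (f 0 * charseq l (i - 1))"
      using rec[of "i - 1"] step2.IH \<open>l \<noteq> 0\<close>
      by (simp add: charseq_def power_int_diff mult_ac)
    then show ?case
      using \<open>l \<noteq> 0\<close> by simp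
  qed
qed

lemma contr_idem_shift_invD:
  assumes "contr_idem_shift_inv \<Phi>" "x \<in> linfty"
  shows "\<Phi> x \<in> linfty" "supnorm (\<Phi> x) \<le> supnorm x" "\<Phi> (\<Phi> x) = \<Phi> x"
    "\<Phi> (bshift x) = bshift (\<Phi> x)"
  using assms unfolding contr_idem_shift_inv_def by blast+

lemma contr_idem_shift_inv_lincomb:
  assumes "contr_idem_shift_inv \<Phi>" "x \<in> linfty" "y \<in> linfty"
  shows "\<Phi> (\<lambda>n. a * x n + b * y n) = (\<lambda>n. a * \<Phi> x n + b * \<Phi> y n)"
  using assms unfolding contr_idem_shift_inv_def by blast

lemma contr_idem_shift_inv_scale:
  assumes "contr_idem_shift_inv \<Phi>" "x \<in> linfty"
  shows "\<Phi> (\<lambda>n. a * x n) = (\<lambda>n. a * \<Phi> x n)"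
  using contr_idem_shift_inv_lincomb[OF assms assms(2), of a 0] by simp

lemma charseq_eigenvector:
  assumes \<Phi>: "contr_idem_shift_inv \<Phi>" and l: "l \<in> circle"
  shows "\<exists>c. \<Phi> (charseq l) = (\<lambda>n. c * charseq l n)"
proof -
  have "l \<noteq> 0"
    using l by (auto simp: circle_def)
  have "bshift (\<Phi> (charseq l)) = (\<lambda>n. l * \<Phi> (charseq l) n)"
    using contr_idem_shift_invD(4)[OF \<Phi> charseq_in_linfty[OF l]]
      contr_idem_shift_inv_scale[OF \<Phi> charseq_in_linfty[OF l]] bshift_charseq[OF \<open>l \<noteq> 0\<close>]
    by simp
  then have "\<Phi> (charseq l) (n + 1) = l * \<Phi> (charseq l) n" for n
    unfolding bshift_def by metis
  then show ?thesis
    using geometric_recurrence_eq_charseq[OF \<open>l \<noteq> 0\<close>] by blast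
qed

lemma spec_charseq_fixed:
  assumes \<Phi>: "contr_idem_shift_inv \<Phi>" and "l \<in> spec \<Phi>"
  shows "\<Phi> (charseq l) = charseq l"
proof -
  from assms(2) obtain c where "c \<noteq> 0" and c: "\<Phi> (charseq l) = (\<lambda>n. c * charseq l n)"
    and l: "l \<in> circle"
    unfolding spec_def by blast
  have "(\<lambda>n. c * (c * charseq l n)) = (\<lambda>n. c * charseq l n)"
    using contr_idem_shift_invD(3)[OF \<Phi> charseq_in_linfty[OF l]]
      contr_idem_shift_inv_scale[OF \<Phi> charseq_in_linfty[OF l], of c]
    by (simp add: c)
  then have "c * c = c"
    using fun_cong[of _ _ 0] by (fastforce simp: charseq_def)
  with \<open>c \<noteq> 0\<close> have "c = 1"
    by simp
  with c show ?thesis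
    by simp
qed

lemma norm_one_plus_norm_one_minus_le:
  fixes u :: complex
  assumes "norm u = 1"
  shows "norm (1 + u) + norm (1 - u) \<le> sqrt 8"
proof (rule real_le_rsqrt)
  have "(Re u)\<^sup>2 + (Im u)\<^sup>2 = 1"
    using assms by (metis cmod_power2 power_one)
  moreover have "(norm (1 + u))\<^sup>2 = (1 + Re u)\<^sup>2 + (Im u)\<^sup>2"
    "(norm (1 - u))\<^sup>2 = (1 - Re u)\<^sup>2 + (Im u)\<^sup>2"
    by (simp_all add: cmod_power2)
  ultimately have "(norm (1 + u))\<^sup>2 + (norm (1 - u))\<^sup>2 = 4"
    by (simp add: power2_eq_square algebra_simps)
  then show "(norm (1 + u) + norm (1 - u))\<^sup>2 \<le> 8"
    using sum_squares_ge_zero[of "norm (1 + u) - norm (1 - u)" 0]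
    by (simp add: power2_eq_square algebra_simps)
qed

lemma norm_add_three_minus_triple_le:
  fixes a b c :: complex
  assumes "norm a = 1" "norm b = 1" "norm c = 1"
  shows "norm (a + b + c - a * cnj b * c) \<le> sqrt 8"
proof -
  define u where "u = a * cnj b"
  have "b * ((1 + u) + c * cnj b * (1 - u))
      = b + (a + c) * (b * cnj b) - a * cnj b * c * (b * cnj b)"
    unfolding u_def by (simp add: algebra_simps)
  moreover have "b * cnj b = 1"
    using complex_norm_square[of b] assms(2) by simp
  ultimately have "a + b + c - a * cnj b * c = b * ((1 + u) + c * cnj b * (1 - u))"
    by simp
  then have "norm (a + b + c - a * cnj b * c) = norm ((1 + u) + c * cnj b * (1 - u))"
    using assms by (simp add: norm_mult)
  also have "\<dots> \<le> norm (1 + u) + norm (c * cnj b * (1 - u))"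
    by (rule norm_triangle_ineq)
  also have "\<dots> = norm (1 + u) + norm (1 - u)"
    using assms by (simp add: norm_mult)
  also have "\<dots> \<le> sqrt 8"
    using assms by (simp add: u_def norm_mult norm_one_plus_norm_one_minus_le)
  finally show ?thesis .
qed

lemma spec_mult_cnj_mult:
  assumes \<Phi>: "contr_idem_shift_inv \<Phi>" and a: "a \<in> spec \<Phi>" and b: "b \<in> spec \<Phi>"
    and c: "c \<in> spec \<Phi>"
  shows "a * cnj b * c \<in> spec \<Phi>"
proof -
  define d where "d = a * cnj b * c"
  have circ: "a \<in> circle" "b \<in> circle" "c \<in> circle"
    using a b c by (auto simp: spec_def)
  then have "d \<in> circle"
    by (simp add: circle_def d_def norm_mult)
  then obtain k where k: "\<Phi> (charseq d) = (\<lambda>n. k * charseq d n)"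
    using charseq_eigenvector[OF \<Phi>] by blast
  have "k \<noteq> 0"
  proof
    assume "k = 0"
    \<comment> \<open>The unit coefficients match the shape of the linearity hypothesis.\<close>
    define s where "s = (\<lambda>n. 1 * charseq a n + 1 * charseq b n)"
    define t where "t = (\<lambda>n. 1 * s n + 1 * charseq c n)"
    define y where "y = (\<lambda>n. 1 * t n + (-1) * charseq d n)"
    note char_in_linfty = charseq_in_linfty[OF circ(1)] charseq_in_linfty[OF circ(2)]
      charseq_in_linfty[OF circ(3)] charseq_in_linfty[OF \<open>d \<in> circle\<close>]
    have "s \<in> linfty" "t \<in> linfty" "y \<in> linfty"
      unfolding s_def t_def y_def by (intro linfty_lincomb char_in_linfty)+
    have "\<Phi> s = s"
      unfolding s_def contr_idem_shift_inv_lincomb[OF \<Phi> char_in_linfty(1,2)]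
      by (simp add: spec_charseq_fixed[OF \<Phi> a] spec_charseq_fixed[OF \<Phi> b])
    then have "\<Phi> t = t"
      unfolding t_def contr_idem_shift_inv_lincomb[OF \<Phi> \<open>s \<in> linfty\<close> char_in_linfty(3)]
      by (simp add: spec_charseq_fixed[OF \<Phi> c])
    then have "\<Phi> y = t"
      unfolding y_def contr_idem_shift_inv_lincomb[OF \<Phi> \<open>t \<in> linfty\<close> char_in_linfty(4)]
      by (simp add: k \<open>k = 0\<close>)
    then have "3 = norm (\<Phi> y 0)"
      by (simp add: t_def s_def charseq_def)
    also have "\<dots> \<le> supnorm y"
      using supnorm_upper[OF contr_idem_shift_invD(1)[OF \<Phi> \<open>y \<in> linfty\<close>]]
        contr_idem_shift_invD(2)[OF \<Phi> \<open>y \<in> linfty\<close>]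
      by (rule order_trans)
    also have "\<dots> \<le> sqrt 8"
    proof (rule supnorm_least)
      fix n
      have "y n = charseq a n + charseq b n + charseq c n
                  - charseq a n * cnj (charseq b n) * charseq c n"
        by (simp add: y_def t_def s_def d_def charseq_def power_int_mult_distrib)
      then show "norm (y n) \<le> sqrt 8"
        using norm_add_three_minus_triple_le norm_charseq circ by metis
    qed
    also have "\<dots> < sqrt 9"
      by (rule real_sqrt_less_mono) simp
    finally show False
      by simp
  qed
  with \<open>d \<in> circle\<close> k show ?thesis
    unfolding spec_def d_def by blast
qed

lemma circle_subgroup_translate:
  assumes "S \<subseteq> circle"
    and closed: "\<And>a b c. a \<in> S \<Longrightarrow> b \<in> S \<Longrightarrow> c \<in> S \<Longrightarrow> a * cnj b * c \<in> S"
    and "l \<in> S"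
  shows "circle_subgroup ((\<lambda>\<mu>. cnj l * \<mu>) ` S)"
  unfolding circle_subgroup_def
proof (intro conjI ballI)
  have norm_S: "norm z = 1" if "z \<in> S" for z
    using that \<open>S \<subseteq> circle\<close> by (auto simp: circle_def)
  then have unit: "cnj z * z = 1" if "z \<in> S" for z
    using that complex_norm_square[of z] by (simp add: mult.commute)
  show "(\<lambda>\<mu>. cnj l * \<mu>) ` S \<subseteq> circle"
    using norm_S \<open>l \<in> S\<close> by (auto simp: circle_def norm_mult)
  show "1 \<in> (\<lambda>\<mu>. cnj l * \<mu>) ` S"
    using \<open>l \<in> S\<close> unit by force
  fix p q
  assume "p \<in> (\<lambda>\<mu>. cnj l * \<mu>) ` S"
  then obtain m where m: "m \<in> S" "p = cnj l * m"
    by blast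
  have "p * (cnj l * (l * cnj m * l)) = (cnj l * l) * (cnj m * m) * (cnj l * l)"
    using m by (simp add: algebra_simps)
  then have "inverse p = cnj l * (l * cnj m * l)"
    using unit m(1) \<open>l \<in> S\<close> by (intro inverse_unique) simp
  then show "inverse p \<in> (\<lambda>\<mu>. cnj l * \<mu>) ` S"
    using closed[OF \<open>l \<in> S\<close> m(1) \<open>l \<in> S\<close>] by blast
  assume "q \<in> (\<lambda>\<mu>. cnj l * \<mu>) ` S"
  then obtain m' where m': "m' \<in> S" "q = cnj l * m'"
    by blast
  have "p * q = cnj l * (m * cnj l * m')"
    using m m' by (simp add: algebra_simps)
  then show "p * q \<in> (\<lambda>\<mu>. cnj l * \<mu>) ` S"
    using closed[OF m(1) \<open>l \<in> S\<close> m'(1)] by blast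
qed

lemma spec_subset_circle: "spec \<Phi> \<subseteq> circle"
  by (auto simp: spec_def)

lemma one_in_spec_if_unital:
  assumes "\<Phi> (\<lambda>n. 1) = (\<lambda>n. 1)"
  shows "1 \<in> spec \<Phi>"
proof -
  have "charseq 1 = (\<lambda>n. 1)"
    by (simp add: charseq_def)
  with assms show ?thesis
    by (auto simp: spec_def circle_def intro: exI[of _ 1])
qed

theorem theorem2p9:
  fixes \<Phi> :: "(int \<Rightarrow> complex) \<Rightarrow> (int \<Rightarrow> complex)"
  assumes "contr_idem_shift_inv \<Phi>"
  shows "(\<forall>l1\<in>spec \<Phi>. \<forall>l2\<in>spec \<Phi>. \<forall>l3\<in>spec \<Phi>. l1 * cnj l2 * l3 \<in> spec \<Phi>)
     \<and> (\<forall>l\<in>spec \<Phi>. circle_subgroup ((\<lambda>\<mu>. cnj l * \<mu>) ` spec \<Phi>))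
     \<and> (\<Phi> (\<lambda>n. 1) = (\<lambda>n. 1) \<longrightarrow> circle_subgroup (spec \<Phi>))"
proof -
  have closed: "\<And>a b c. a \<in> spec \<Phi> \<Longrightarrow> b \<in> spec \<Phi> \<Longrightarrow> c \<in> spec \<Phi> \<Longrightarrow>
      a * cnj b * c \<in> spec \<Phi>"
    by (rule spec_mult_cnj_mult[OF assms])
  have translate: "circle_subgroup ((\<lambda>\<mu>. cnj l * \<mu>) ` spec \<Phi>)" if "l \<in> spec \<Phi>" for l
    by (rule circle_subgroup_translate[OF spec_subset_circle closed that])
  have "circle_subgroup (spec \<Phi>)" if "\<Phi> (\<lambda>n. 1) = (\<lambda>n. 1)"
    using translate[OF one_in_spec_if_unital[of \<Phi>, OF that]] by simp
  with closed translate show ?thesis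
    by blast
qed

end
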